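(* For every $n\ge1$ there is a bijection $\varrho:\mathcal{I}_n\to\mathcal{I}_n$ such that for all $s\in\mathcal{I}_n$, $$(\mathsf{asc},\mathsf{rep},\mathsf{zero},\mathsf{max})(s)=(\mathsf{rep},\mathsf{asc},\mathsf{rmin},\mathsf{zero})(\varrho(s)).$$
   Context: $\mathcal{I}_n$ is the set of inversion sequences $(s_1,\dots,s_n)$ of integers with $0\le s_i<i$ for all $i$. $\mathsf{asc}(s)=|\{i\in[n-1]:s_i<s_{i+1}\}|$; $\mathsf{rep}(s)=n-|\{s_1,\dots,s_n\}|$; $\mathsf{zero}(s)=|\{i:s_i=0\}|$; $\mathsf{max}(s)=|\{i:s_i=i-1\}|$; $\mathsf{rmin}(s)=|\{s_i: s_i<s_j \text{ for all } j>i\}|$ (number of right-to-left minima). *)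

theory Defs
  imports Main
begin

text \<open>Inversion sequences of length n, represented 0-indexed as lists:
  the paper's s_i (1 <= i <= n) is s ! (i - 1), and 0 <= s_i < i becomes s ! k <= k.\<close>

definition inv_seqs :: "nat \<Rightarrow> nat list set" where
  "inv_seqs n = {s. length s = n \<and> (\<forall>k<n. s ! k \<le> k)}"

definition asc :: "nat list \<Rightarrow> nat" where
  "asc s = card {k. Suc k < length s \<and> s ! k < s ! Suc k}"

definition rep :: "nat list \<Rightarrow> nat" where
  "rep s = length s - card (set s)"

definition zero :: "nat list \<Rightarrow> nat" where
  "zero s = card {k. k < length s \<and> s ! k = 0}"

definition maxst :: "nat list \<Rightarrow> nat" where
  "maxst s = card {k. k < length s \<and> s ! k = k}"

definition rmin :: "nat list \<Rightarrow> nat" where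
  "rmin s = card {s ! k | k. k < length s \<and> (\<forall>j. k < j \<and> j < length s \<longrightarrow> s ! k < s ! j)}"

end

(*
  Encode an inversion sequence s by the permutation \<pi> in which exactly s_i of the entries left of
  position i exceed \<pi>_i. This turns (asc, zero, max, rmin) of s into (des, lrmax, lrmin, rlmax) of \<pi>,
  but rep has no such counterpart. Instead, rep is traded for the number iasc of inverse ascents
  of \<pi> without changing its joint distribution with asc, zero, max and rmin: hybrid statistics
  interpolate between the two, and consecutive ones differ by shifting a set of recorded values,
  which amounts to exchanging adjacent values p, p + 1 in a tail of s, an operation preserving
  asc, zero, max and rmin. Finally, \<pi> \<mapsto> (complement of \<pi>^-1) sends (des, iasc, lrmax, lrmin)
  to (iasc, des, rlmax, lrmax). So the two quadruples of statistics in the theorem are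
  equidistributed on inversion sequences of length n, and matching their fibres gives \<rho>.
*)

theory Submission
  imports Defs "HOL-Combinatorics.Multiset_Permutations" "HOL-Combinatorics.Transposition"
    "HOL-Library.Disjoint_Sets"
begin

lemma length_inv_seqs: "s \<in> inv_seqs n \<Longrightarrow> length s = n"
  by (simp add: inv_seqs_def)

lemma inv_seqs_Suc: "inv_seqs (Suc n) = (\<lambda>(s, x). s @ [x]) ` (inv_seqs n \<times> {..n})"
proof (intro equalityI subsetI)
  fix t assume t: "t \<in> inv_seqs (Suc n)"
  then obtain s x where tx: "t = s @ [x]" and len: "length s = n"
    by (cases t rule: rev_cases) (auto simp: inv_seqs_def)
  have "s ! k \<le> k" if "k < n" for k
    using t that by (auto simp: inv_seqs_def tx len nth_append dest: spec[of _ k])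
  moreover have "x \<le> n"
    using t len by (auto simp: inv_seqs_def tx dest: spec[of _ n])
  ultimately show "t \<in> (\<lambda>(s, x). s @ [x]) ` (inv_seqs n \<times> {..n})"
    using tx len by (force simp: inv_seqs_def)
qed (auto simp: inv_seqs_def nth_append less_Suc_eq)

lemma finite_inv_seqs: "finite (inv_seqs n)"
proof (rule finite_subset)
  show "inv_seqs n \<subseteq> {s. set s \<subseteq> {..n} \<and> length s = n}"
    by (auto simp: inv_seqs_def in_set_conv_nth) (meson le_trans less_imp_le_nat)
qed (simp add: finite_lists_length_eq)

lemma card_inv_seqs: "card (inv_seqs n) = fact n"
proof (induction n)
  case 0
  have "inv_seqs 0 = {[]}" by (auto simp: inv_seqs_def)
  then show ?case by simp
next
  case (Suc n)
  have "inj_on (\<lambda>(s, x). s @ [x]) (inv_seqs n \<times> {..n})" by (auto simp: inj_on_def)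
  then have "card (inv_seqs (Suc n)) = card (inv_seqs n) * Suc n"
    by (simp add: inv_seqs_Suc card_image card_cartesian_product)
  with Suc show ?case by (simp add: algebra_simps)
qed

definition inv_tails :: "nat \<Rightarrow> nat \<Rightarrow> nat list set" where
  "inv_tails m k = {c. length c = k \<and> (\<forall>i<k. c ! i \<le> m + i)}"

lemma finite_inv_tails: "finite (inv_tails m k)"
proof (rule finite_subset)
  show "inv_tails m k \<subseteq> {s. set s \<subseteq> {..m + k} \<and> length s = k}"
    by (auto simp: inv_tails_def in_set_conv_nth) (meson add_le_mono le_refl le_trans less_imp_le_nat)
qed (simp add: finite_lists_length_eq)

lemma append_in_inv_seqs_iff:
  assumes "length u = m"
  shows "u @ c \<in> inv_seqs (m + k) \<longleftrightarrow> u \<in> inv_seqs m \<and> c \<in> inv_tails m k"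
proof -
  have "(\<forall>i<m + k. (u @ c) ! i \<le> i) \<longleftrightarrow> (\<forall>i<m. u ! i \<le> i) \<and> (\<forall>i<k. c ! i \<le> m + i)"
  proof -
    have split: "(\<forall>i<m + k. P i) \<longleftrightarrow> (\<forall>i<m. P i) \<and> (\<forall>i<k. P (m + i))" for P
      by (auto, metis add_diff_inverse_nat add_less_cancel_left)
    show ?thesis
      unfolding split using assms by (simp add: nth_append)
  qed
  then show ?thesis using assms by (auto simp: inv_seqs_def inv_tails_def)
qed

lemma card_inv_seqs_split:
  "card {s \<in> inv_seqs (m + k). Q s} = (\<Sum>u\<in>inv_seqs m. card {c \<in> inv_tails m k. Q (u @ c)})"
proof -
  let ?S = "Sigma (inv_seqs m) (\<lambda>u. {c \<in> inv_tails m k. Q (u @ c)})"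
  have "bij_betw (\<lambda>(u, c). u @ c) ?S {s \<in> inv_seqs (m + k). Q s}"
  proof (rule bij_betwI[where g = "\<lambda>s. (take m s, drop m s)"])
    show "(\<lambda>(u, c). u @ c) \<in> ?S \<rightarrow> {s \<in> inv_seqs (m + k). Q s}"
      using append_in_inv_seqs_iff by (auto simp: length_inv_seqs)
    show "(\<lambda>s. (take m s, drop m s)) \<in> {s \<in> inv_seqs (m + k). Q s} \<rightarrow> ?S"
    proof
      fix s assume s: "s \<in> {s \<in> inv_seqs (m + k). Q s}"
      then have "take m s @ drop m s \<in> inv_seqs (m + k)" "length (take m s) = m"
        by (auto simp: length_inv_seqs)
      with s show "(take m s, drop m s) \<in> ?S" by (simp only: append_in_inv_seqs_iff) simp
    qed
  qed (auto simp: length_inv_seqs)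
  then have "card {s \<in> inv_seqs (m + k). Q s} = card ?S" by (simp add: bij_betw_same_card)
  also have "\<dots> = (\<Sum>u\<in>inv_seqs m. card {c \<in> inv_tails m k. Q (u @ c)})"
    by (rule card_SigmaI) (auto simp: finite_inv_seqs intro: finite_subset[OF _ finite_inv_tails])
  finally show ?thesis .
qed

section \<open>Hybrid statistics\<close>

definition bump :: "nat \<Rightarrow> nat \<Rightarrow> nat" where
  "bump v y = (if v \<le> y then Suc y else y)"

lemma bump_less_iff [simp]: "bump v a < bump v b \<longleftrightarrow> a < b"
  by (auto simp: bump_def)

lemma bump_neq [simp]: "bump v y \<noteq> v"
  by (simp add: bump_def)

lemma inj_bump: "inj (bump v)"
  by (rule injI) (auto simp: bump_def split: if_splits)

definition bump_insert :: "nat \<Rightarrow> nat set \<Rightarrow> nat set" where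
  "bump_insert x Y = insert x (bump (Suc x) ` Y)"

lemma bump_insert_eq: "bump_insert x Y = {y \<in> Y. y < x} \<union> {x} \<union> Suc ` {y \<in> Y. x < y}"
proof -
  have "bump (Suc x) ` Y = {y \<in> Y. y \<le> x} \<union> Suc ` {y \<in> Y. x < y}"
    by (force simp: bump_def image_iff not_le)
  then show ?thesis by (auto simp: bump_insert_def)
qed

lemma mem_bump_insert:
  "y \<in> bump_insert x Y \<longleftrightarrow> y = x \<or> (y < x \<and> y \<in> Y) \<or> (Suc x < y \<and> y - 1 \<in> Y)"
  by (cases y) (auto simp: bump_insert_eq)

lemma card_bump_insert:
  assumes "finite Y"
  shows "card (bump_insert x Y) = card Y + (if x \<in> Y then 0 else 1)"
proof -
  have "x \<in> bump (Suc x) ` Y \<longleftrightarrow> x \<in> Y" by (auto simp: bump_def image_iff)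
  moreover have "card (bump (Suc x) ` Y) = card Y" by (simp add: card_image inj_on_subset[OF inj_bump])
  ultimately show ?thesis using assms by (simp add: bump_insert_def card_insert_if)
qed

primrec hyb_set_rev :: "nat \<Rightarrow> nat list \<Rightarrow> nat set" where
  "hyb_set_rev j [] = {}"
| "hyb_set_rev j (x # r) =
    (if length r < j then bump_insert x (hyb_set_rev j r) else insert x (hyb_set_rev j r))"

primrec hyb_rep_rev :: "nat \<Rightarrow> nat list \<Rightarrow> nat" where
  "hyb_rep_rev j [] = 0"
| "hyb_rep_rev j (x # r) = hyb_rep_rev j r + (if x \<in> hyb_set_rev j r then 1 else 0)"

text \<open>The hybrid statistics interpolating between \<open>rep\<close> (at \<open>j = 0\<close>) and the inverse ascents
  of the permutation encoded by \<open>s\<close> (at \<open>j = length s\<close>): entries in the first \<open>j\<close> positions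
  update the recorded set as values are inserted into a permutation, later entries as plain values.\<close>

definition hyb_set :: "nat \<Rightarrow> nat list \<Rightarrow> nat set" where
  "hyb_set j s = hyb_set_rev j (rev s)"

definition hyb_rep :: "nat \<Rightarrow> nat list \<Rightarrow> nat" where
  "hyb_rep j s = hyb_rep_rev j (rev s)"

lemma hyb_set_Nil [simp]: "hyb_set j [] = {}"
  by (simp add: hyb_set_def)

lemma hyb_set_snoc:
  "hyb_set j (s @ [x]) = (if length s < j then bump_insert x (hyb_set j s) else insert x (hyb_set j s))"
  by (simp add: hyb_set_def)

lemma hyb_rep_Nil [simp]: "hyb_rep j [] = 0"
  by (simp add: hyb_rep_def)

lemma hyb_rep_snoc: "hyb_rep j (s @ [x]) = hyb_rep j s + (if x \<in> hyb_set j s then 1 else 0)"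
  by (simp add: hyb_rep_def hyb_set_def)

lemma hyb_set_cong_short:
  "length s \<le> j \<Longrightarrow> length s \<le> j' \<Longrightarrow> hyb_set j s = hyb_set j' s"
  by (induction s rule: rev_induct) (auto simp: hyb_set_snoc)

lemma hyb_rep_cong_short:
  "length s \<le> j \<Longrightarrow> length s \<le> j' \<Longrightarrow> hyb_rep j s = hyb_rep j' s"
proof (induction s rule: rev_induct)
  case (snoc x s)
  then have "hyb_set j s = hyb_set j' s" by (simp add: hyb_set_cong_short)
  with snoc show ?case by (simp add: hyb_rep_snoc)
qed simp

lemma hyb_set_0: "hyb_set 0 s = set s"
  by (induction s rule: rev_induct) (auto simp: hyb_set_snoc)

lemma hyb_rep_0: "hyb_rep 0 s = rep s"
proof (induction s rule: rev_induct)
  case (snoc x s)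
  have "card (set s) \<le> length s" by (rule card_length)
  with snoc show ?case
    by (cases "x \<in> set s") (simp_all add: hyb_rep_snoc hyb_set_0 rep_def insert_absorb)
qed (simp add: rep_def)

lemma hyb_set_subset: "s \<in> inv_seqs n \<Longrightarrow> hyb_set j s \<subseteq> {..<n}"
proof (induction n arbitrary: s)
  case (Suc n)
  then obtain s' x where "s = s' @ [x]" "s' \<in> inv_seqs n" "x \<le> n"
    by (auto simp: inv_seqs_Suc)
  with Suc.IH[of s'] show ?case
    by (auto simp: hyb_set_snoc mem_bump_insert subset_iff length_inv_seqs)
qed (simp add: inv_seqs_def)

definition rep_over :: "nat set \<Rightarrow> nat list \<Rightarrow> nat" where
  "rep_over W c = length c - card (set c - W)"

lemma rep_over_snoc: "rep_over W (c @ [y]) = rep_over W c + (if y \<in> W \<union> set c then 1 else 0)"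
proof -
  have le: "card (set c - W) \<le> length c"
    by (meson card_length card_mono Diff_subset finite_set le_trans)
  show ?thesis
  proof (cases "y \<in> W \<union> set c")
    case True
    then have "set (c @ [y]) - W = set c - W" by auto
    with True le show ?thesis by (simp add: rep_over_def)
  next
    case False
    then have "set (c @ [y]) - W = insert y (set c - W)" by auto
    with False le show ?thesis by (simp add: rep_over_def)
  qed
qed

lemma hyb_set_append: "j \<le> length u \<Longrightarrow> hyb_set j (u @ c) = hyb_set j u \<union> set c"
  by (induction c rule: rev_induct) (auto simp: hyb_set_snoc simp flip: append_assoc)

lemma hyb_rep_append: "j \<le> length u \<Longrightarrow> hyb_rep j (u @ c) = hyb_rep j u + rep_over (hyb_set j u) c"
proof (induction c rule: rev_induct)
  case (snoc y c)
  then show ?case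
    using hyb_rep_snoc[of j "u @ c" y] hyb_set_append[OF snoc.prems, of c]
    by (simp add: rep_over_snoc)
qed (simp add: rep_over_def)

section \<open>Exchanging adjacent values in a tail\<close>

definition is_rmin_pos :: "nat list \<Rightarrow> nat \<Rightarrow> bool" where
  "is_rmin_pos s k \<longleftrightarrow> (\<forall>j. k < j \<and> j < length s \<longrightarrow> s ! k < s ! j)"

lemma rmin_eq_card_pos: "rmin s = card {k. k < length s \<and> is_rmin_pos s k}"
proof -
  have "inj_on ((!) s) {k. k < length s \<and> is_rmin_pos s k}"
    by (rule inj_onI) (metis (mono_tags) is_rmin_pos_def linorder_neqE_nat mem_Collect_eq order.irrefl)
  moreover have "{s ! k | k. k < length s \<and> (\<forall>j. k < j \<and> j < length s \<longrightarrow> s ! k < s ! j)}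
      = (!) s ` {k. k < length s \<and> is_rmin_pos s k}"
    by (auto simp: is_rmin_pos_def)
  ultimately show ?thesis by (simp add: rmin_def card_image)
qed

definition asc_zero_max_rmin :: "nat list \<Rightarrow> nat \<times> nat \<times> nat \<times> nat" where
  "asc_zero_max_rmin s = (asc s, zero s, maxst s, rmin s)"

abbreviation swap_Suc :: "nat \<Rightarrow> nat \<Rightarrow> nat" where
  "swap_Suc p \<equiv> transpose p (Suc p)"

definition swap_adj :: "nat \<Rightarrow> nat list \<Rightarrow> nat list" where
  "swap_adj p c = (if p \<in> set c \<longleftrightarrow> Suc p \<in> set c then c else map (swap_Suc p) c)"

lemma swap_adj_swap_adj [simp]: "swap_adj p (swap_adj p c) = c"
proof (cases "p \<in> set c \<longleftrightarrow> Suc p \<in> set c")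
  case False
  then have "\<not> (p \<in> set (map (swap_Suc p) c) \<longleftrightarrow> Suc p \<in> set (map (swap_Suc p) c))"
    by (auto simp: in_transpose_image_iff)
  with False show ?thesis by (simp add: swap_adj_def comp_def)
qed (simp add: swap_adj_def)

lemma rep_over_swap_adj: "rep_over (swap_Suc p ` W) (swap_adj p c) = rep_over W c"
proof -
  have "set (swap_adj p c) - swap_Suc p ` W = swap_Suc p ` (set c - W)"
    by (simp add: swap_adj_def image_set_diff[OF inj_transpose])
  then show ?thesis
    by (simp add: rep_over_def swap_adj_def card_image)
qed

lemma swap_adj_in_inv_tails:
  assumes "c \<in> inv_tails m k" "Suc p < m"
  shows "swap_adj p c \<in> inv_tails m k"
  using assms by (auto simp: inv_tails_def swap_adj_def transpose_def)

lemma swap_Suc_less_iff: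
  assumes "\<not> (a = p \<and> b = Suc p)" "\<not> (a = Suc p \<and> b = p)"
  shows "swap_Suc p a < swap_Suc p b \<longleftrightarrow> a < b"
  using assms by (auto simp: transpose_def)

lemma less_swap_Suc_iff: "y < p \<Longrightarrow> y < swap_Suc p a \<longleftrightarrow> y < a"
  by (auto simp: transpose_def)

context
  fixes u c :: "nat list" and p m :: nat
  assumes u: "u \<in> inv_seqs m" "u \<noteq> []" "last u < p" "Suc p < m"
    and not_both: "\<not> (p \<in> set c \<and> Suc p \<in> set c)"
begin

private lemma len_u: "length u = m"
  using u(1) by (rule length_inv_seqs)

private lemma nth_last_u: "(u @ c) ! (m - 1) = last u"
proof -
  have "m - 1 < m" using u(4) by simp
  then show ?thesis using u(2) len_u by (simp add: nth_append last_conv_nth)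
qed

private lemma nth_swap_prefix: "i < m \<Longrightarrow> (u @ map (swap_Suc p) c) ! i = (u @ c) ! i"
  using len_u by (simp add: nth_append)

private lemma nth_swap_tail:
  "m \<le> i \<Longrightarrow> i < m + length c \<Longrightarrow> (u @ map (swap_Suc p) c) ! i = swap_Suc p ((u @ c) ! i)"
  using len_u by (simp add: nth_append)

private lemma nth_tail_in_set: "m \<le> i \<Longrightarrow> i < m + length c \<Longrightarrow> (u @ c) ! i \<in> set c"
  using len_u by (simp add: nth_append)

text \<open>Since only one of \<open>p, p + 1\<close> occurs in \<open>c\<close>, exchanging them does not change any
  comparison within \<open>c\<close>, nor any comparison with a value below \<open>p\<close>.\<close>

private lemma nth_swap_less_iff:
  assumes "i < j" "m \<le> j" "j < m + length c" "m \<le> i \<or> (u @ c) ! i < p"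
  shows "(u @ map (swap_Suc p) c) ! i < (u @ map (swap_Suc p) c) ! j \<longleftrightarrow> (u @ c) ! i < (u @ c) ! j"
proof (cases "i < m")
  case True
  with assms show ?thesis
    by (simp add: nth_swap_prefix nth_swap_tail less_swap_Suc_iff)
next
  case False
  then have "(u @ c) ! i \<in> set c" "(u @ c) ! j \<in> set c"
    using assms by (simp_all add: nth_tail_in_set)
  with False assms not_both show ?thesis
    by (auto simp: nth_swap_tail intro!: swap_Suc_less_iff)
qed

lemma asc_swap: "asc (u @ map (swap_Suc p) c) = asc (u @ c)"
proof -
  have "(u @ map (swap_Suc p) c) ! k < (u @ map (swap_Suc p) c) ! Suc k \<longleftrightarrow> (u @ c) ! k < (u @ c) ! Suc k"
    if "Suc k < m + length c" for k
  proof (cases "Suc k < m")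
    case True
    then show ?thesis by (simp add: nth_swap_prefix)
  next
    case False
    then have "m \<le> k \<or> k = m - 1" by linarith
    then have "m \<le> k \<or> (u @ c) ! k < p" using nth_last_u u(3) by auto
    with False that show ?thesis by (intro nth_swap_less_iff) auto
  qed
  then show ?thesis
    unfolding asc_def using len_u by (intro arg_cong[where f = card]) auto
qed

lemma zero_swap: "zero (u @ map (swap_Suc p) c) = zero (u @ c)"
proof -
  have "(u @ map (swap_Suc p) c) ! i = 0 \<longleftrightarrow> (u @ c) ! i = 0" if "i < m + length c" for i
    using that u(3) by (cases "i < m") (auto simp: nth_swap_prefix nth_swap_tail transpose_def)
  then show ?thesis
    unfolding zero_def using len_u by (intro arg_cong[where f = card]) auto
qed

lemma maxst_swap: "maxst (u @ map (swap_Suc p) c) = maxst (u @ c)"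
proof -
  have "(u @ map (swap_Suc p) c) ! i = i \<longleftrightarrow> (u @ c) ! i = i" if "i < m + length c" for i
    using that u(4) by (cases "i < m") (auto simp: nth_swap_prefix nth_swap_tail transpose_def)
  then show ?thesis
    unfolding maxst_def using len_u by (intro arg_cong[where f = card]) auto
qed

text \<open>An entry of \<open>u\<close> that is at least \<open>p\<close> is never a right-to-left minimum, as the last entry
  of \<open>u\<close> is smaller.\<close>

lemma rmin_swap: "rmin (u @ map (swap_Suc p) c) = rmin (u @ c)"
proof -
  have "is_rmin_pos (u @ map (swap_Suc p) c) i \<longleftrightarrow> is_rmin_pos (u @ c) i"
    if i: "i < m + length c" for i
  proof (cases "m \<le> i \<or> (u @ c) ! i < p")
    case True
    have "(u @ map (swap_Suc p) c) ! i < (u @ map (swap_Suc p) c) ! j \<longleftrightarrow> (u @ c) ! i < (u @ c) ! j"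
      if "i < j" "j < m + length c" for j
    proof (cases "j < m")
      case False
      with True that show ?thesis by (intro nth_swap_less_iff) auto
    qed (use that in \<open>simp add: nth_swap_prefix\<close>)
    then show ?thesis using len_u by (auto simp: is_rmin_pos_def)
  next
    case False
    then have "i \<noteq> m - 1" using nth_last_u u(3) by auto
    with False have im: "i < m - 1" by linarith
    from False have lt: "(u @ c) ! (m - 1) < (u @ c) ! i" using nth_last_u u(3) by simp
    have "\<not> is_rmin_pos (u @ c) i"
      using im lt len_u by (auto simp: is_rmin_pos_def dest!: spec[of _ "m - 1"])
    moreover have "\<not> is_rmin_pos (u @ map (swap_Suc p) c) i"
      using im lt len_u nth_swap_prefix[of i] nth_swap_prefix[of "m - 1"]
      by (auto simp: is_rmin_pos_def dest!: spec[of _ "m - 1"])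
    ultimately show ?thesis by simp
  qed
  then show ?thesis
    unfolding rmin_eq_card_pos using len_u by (intro arg_cong[where f = card]) auto
qed

end

lemma asc_zero_max_rmin_swap_adj:
  assumes "u \<in> inv_seqs m" "u \<noteq> []" "last u < p" "Suc p < m"
  shows "asc_zero_max_rmin (u @ swap_adj p c) = asc_zero_max_rmin (u @ c)"
  using assms asc_swap zero_swap maxst_swap rmin_swap
  by (auto simp: asc_zero_max_rmin_def swap_adj_def)

lemma card_rep_over_swap:
  assumes u: "u \<in> inv_seqs m" "u \<noteq> []" "last u < p" "Suc p < m"
  shows "card {c \<in> inv_tails m k. Q (rep_over W c) (asc_zero_max_rmin (u @ c))}
       = card {c \<in> inv_tails m k. Q (rep_over (swap_Suc p ` W) c) (asc_zero_max_rmin (u @ c))}"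
proof (rule bij_betw_same_card[of "swap_adj p"], rule bij_betwI[where g = "swap_adj p"])
  have W: "rep_over W (swap_adj p c) = rep_over (swap_Suc p ` W) c" for c
    using rep_over_swap_adj[of p "swap_Suc p ` W" c] by (simp add: image_image)
  show "swap_adj p \<in> {c \<in> inv_tails m k. Q (rep_over W c) (asc_zero_max_rmin (u @ c))}
      \<rightarrow> {c \<in> inv_tails m k. Q (rep_over (swap_Suc p ` W) c) (asc_zero_max_rmin (u @ c))}"
    using swap_adj_in_inv_tails[OF _ u(4)] asc_zero_max_rmin_swap_adj[OF u] rep_over_swap_adj
    by auto
  show "swap_adj p \<in> {c \<in> inv_tails m k. Q (rep_over (swap_Suc p ` W) c) (asc_zero_max_rmin (u @ c))}
      \<rightarrow> {c \<in> inv_tails m k. Q (rep_over W c) (asc_zero_max_rmin (u @ c))}"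
    using swap_adj_in_inv_tails[OF _ u(4)] asc_zero_max_rmin_swap_adj[OF u] W
    by auto
qed simp_all

text \<open>Shifting the elements of \<open>S\<close> up by one, largest first, is a sequence of transpositions
  of adjacent values.\<close>

lemma card_rep_over_shift:
  assumes u: "u \<in> inv_seqs m" "u \<noteq> []" and "finite S"
    and "S \<subseteq> {last u<..<m - 1}" "B \<inter> (S \<union> Suc ` S) = {}"
  shows "card {c \<in> inv_tails m k. Q (rep_over (B \<union> S) c) (asc_zero_max_rmin (u @ c))}
       = card {c \<in> inv_tails m k. Q (rep_over (B \<union> Suc ` S) c) (asc_zero_max_rmin (u @ c))}"
  using assms(3-)
proof (induction S arbitrary: B rule: finite_remove_induct)
  case (remove A)
  define M where "M = Max A"
  define A' where "A' = A - {M}"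
  have M: "M \<in> A" "\<And>a. a \<in> A' \<Longrightarrow> a < M"
    using remove by (auto simp: M_def A'_def le_neq_trans)
  then have "M \<in> {last u<..<m - 1}" using remove.prems(1) by blast
  then have bounds: "last u < M" "Suc M < m" by auto
  have swap_image: "swap_Suc M ` (B \<union> A) = (B \<union> {Suc M}) \<union> A'"
  proof -
    have "swap_Suc M y = y" if "y \<in> B \<union> A'" for y
      using that remove.prems(2) M by (fastforce simp: transpose_def)
    then have "swap_Suc M ` (B \<union> A') = B \<union> A'" by simp
    moreover have "B \<union> A = insert M (B \<union> A')" using M A'_def by auto
    ultimately show ?thesis by auto
  qed
  have "card {c \<in> inv_tails m k. Q (rep_over (B \<union> A) c) (asc_zero_max_rmin (u @ c))}
     = card {c \<in> inv_tails m k. Q (rep_over ((B \<union> {Suc M}) \<union> A') c) (asc_zero_max_rmin (u @ c))}"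
    using card_rep_over_swap[OF u bounds, of k Q "B \<union> A"] by (simp only: swap_image)
  also have "\<dots> = card {c \<in> inv_tails m k. Q (rep_over ((B \<union> {Suc M}) \<union> Suc ` A') c) (asc_zero_max_rmin (u @ c))}"
  proof (rule remove.IH[OF M(1), folded A'_def])
    show "A' \<subseteq> {last u<..<m - 1}" using remove.prems A'_def by auto
    show "(B \<union> {Suc M}) \<inter> (A' \<union> Suc ` A') = {}"
      using remove.prems(2) A'_def M by fastforce
  qed
  also have "(B \<union> {Suc M}) \<union> Suc ` A' = B \<union> Suc ` A" using M A'_def by auto
  finally show ?case .
qed simp

text \<open>At \<open>j\<close> and \<open>j + 1\<close> the hybrid statistics differ only in how the entry \<open>x\<close> at position \<open>j\<close>
  enters the recorded set \<open>Y\<close>: \<open>insert x Y\<close> versus \<open>bump_insert x Y\<close>, which differ by shifting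
  the elements of \<open>Y\<close> above \<open>x\<close>.\<close>

lemma card_tails_hyb_rep_Suc:
  assumes u: "u \<in> inv_seqs (Suc j)"
  shows "card {c \<in> inv_tails (Suc j) k. Q (hyb_rep j (u @ c)) (asc_zero_max_rmin (u @ c))}
       = card {c \<in> inv_tails (Suc j) k. Q (hyb_rep (Suc j) (u @ c)) (asc_zero_max_rmin (u @ c))}"
proof -
  obtain v x where uv: "u = v @ [x]" and v: "v \<in> inv_seqs j"
    using u by (auto simp: inv_seqs_Suc)
  have lv: "length v = j" using v by (rule length_inv_seqs)
  define Y where "Y = hyb_set j v"
  define B where "B = {y \<in> Y. y < x} \<union> {x}"
  define S where "S = {y \<in> Y. x < y}"
  have Y: "Y \<subseteq> {..<j}"
    using hyb_set_subset[OF v] by (simp add: Y_def)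
  have hyb_set_u: "hyb_set j u = B \<union> S" "hyb_set (Suc j) u = B \<union> Suc ` S"
    using lv hyb_set_cong_short[of v j "Suc j"]
    by (auto simp: uv hyb_set_snoc Y_def B_def S_def bump_insert_eq)
  have hyb_rep_u: "hyb_rep (Suc j) u = hyb_rep j u"
    using lv hyb_rep_cong_short[of v j "Suc j"] hyb_set_cong_short[of v j "Suc j"]
    by (simp add: uv hyb_rep_snoc)
  have shift: "card {c \<in> inv_tails (Suc j) k. Q (hyb_rep j u + rep_over (B \<union> S) c) (asc_zero_max_rmin (u @ c))}
      = card {c \<in> inv_tails (Suc j) k. Q (hyb_rep j u + rep_over (B \<union> Suc ` S) c) (asc_zero_max_rmin (u @ c))}"
  proof (rule card_rep_over_shift[OF u])
    show "finite S" using Y by (auto simp: S_def intro: finite_subset)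
    show "S \<subseteq> {last u<..<Suc j - 1}" using Y by (auto simp: S_def uv)
  qed (auto simp: uv B_def S_def)
  show ?thesis
    using shift u lv by (simp add: hyb_rep_append hyb_set_u hyb_rep_u length_inv_seqs)
qed

lemma card_hyb_rep_Suc:
  assumes "j < n"
  shows "card {s \<in> inv_seqs n. Q (hyb_rep j s) (asc_zero_max_rmin s)}
       = card {s \<in> inv_seqs n. Q (hyb_rep (Suc j) s) (asc_zero_max_rmin s)}"
proof -
  obtain k where n: "n = Suc j + k" using assms less_iff_Suc_add by auto
  show ?thesis
    unfolding n card_inv_seqs_split by (intro sum.cong refl card_tails_hyb_rep_Suc)
qed

lemma card_rep_eq_card_hyb_rep:
  "card {s \<in> inv_seqs n. Q (rep s) (asc_zero_max_rmin s)}
 = card {s \<in> inv_seqs n. Q (hyb_rep n s) (asc_zero_max_rmin s)}"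
proof -
  have "card {s \<in> inv_seqs n. Q (hyb_rep 0 s) (asc_zero_max_rmin s)}
      = card {s \<in> inv_seqs n. Q (hyb_rep j s) (asc_zero_max_rmin s)}" if "j \<le> n" for j
    using that by (induction j) (simp_all add: card_hyb_rep_Suc)
  then show ?thesis by (simp add: hyb_rep_0)
qed

section \<open>Permutations encoded by inversion sequences\<close>

abbreviation perms :: "nat \<Rightarrow> nat list set" where
  "perms n \<equiv> permutations_of_set {..<n}"

lemma length_perms: "p \<in> perms n \<Longrightarrow> length p = n"
  by (simp add: length_finite_permutations_of_set)

lemma nth_perms_less: "p \<in> perms n \<Longrightarrow> i < n \<Longrightarrow> p ! i < n"
  using nth_mem[of i p] length_perms[of p n] permutations_of_setD(1)[of p "{..<n}"] by auto

definition snoc_bump :: "nat \<Rightarrow> nat list \<Rightarrow> nat list" where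
  "snoc_bump v p = map (bump v) p @ [v]"

lemma length_snoc_bump [simp]: "length (snoc_bump v p) = Suc (length p)"
  by (simp add: snoc_bump_def)

lemma nth_snoc_bump: "i < length p \<Longrightarrow> snoc_bump v p ! i = bump v (p ! i)"
  by (simp add: snoc_bump_def nth_append)

lemma nth_snoc_bump_last: "snoc_bump v p ! length p = v"
  by (simp add: snoc_bump_def nth_append)

lemma snoc_bump_perms:
  assumes p: "p \<in> perms n" and "v \<le> n"
  shows "snoc_bump v p \<in> perms (Suc n)"
proof
  have "bump v ` {..<n} \<union> {v} = {..<Suc n}"
  proof (intro equalityI subsetI)
    fix w assume w: "w \<in> {..<Suc n}"
    consider "w < v" | "w = v" | "v < w" by linarith
    then show "w \<in> bump v ` {..<n} \<union> {v}"
    proof cases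
      case 1
      then have "w = bump v w" "w < n" using assms(2) by (auto simp: bump_def)
      then show ?thesis by blast
    next
      case 3
      then have "w = bump v (w - 1)" "w - 1 < n" using w by (auto simp: bump_def)
      then show ?thesis by blast
    qed simp
  qed (use assms(2) in \<open>auto simp: bump_def\<close>)
  then show "set (snoc_bump v p) = {..<Suc n}"
    by (simp add: snoc_bump_def permutations_of_setD(1)[OF p] Un_commute)
  show "distinct (snoc_bump v p)"
    using permutations_of_setD(2)[OF p] inj_bump[of v]
    by (auto simp: snoc_bump_def distinct_map intro: inj_on_subset dest: sym)
qed

primrec perm_of_code_rev :: "nat list \<Rightarrow> nat list" where
  "perm_of_code_rev [] = []"
| "perm_of_code_rev (x # r) = snoc_bump (length r - x) (perm_of_code_rev r)"

text \<open>Appending the value \<open>length s - x\<close> and shifting the values above it leaves exactly \<open>x\<close>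
  larger entries to its left.\<close>

definition perm_of_code :: "nat list \<Rightarrow> nat list" where
  "perm_of_code s = perm_of_code_rev (rev s)"

lemma perm_of_code_Nil [simp]: "perm_of_code [] = []"
  by (simp add: perm_of_code_def)

lemma perm_of_code_snoc: "perm_of_code (s @ [x]) = snoc_bump (length s - x) (perm_of_code s)"
  by (simp add: perm_of_code_def)

lemma perm_of_code_perms: "s \<in> inv_seqs n \<Longrightarrow> perm_of_code s \<in> perms n"
proof (induction n arbitrary: s)
  case (Suc n)
  then obtain s' x where "s = s' @ [x]" "s' \<in> inv_seqs n" "x \<le> n"
    by (auto simp: inv_seqs_Suc)
  with Suc.IH show ?case
    by (simp add: perm_of_code_snoc length_inv_seqs snoc_bump_perms)
qed (simp add: inv_seqs_def)

definition larger_left :: "'a::linorder list \<Rightarrow> nat \<Rightarrow> nat" where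
  "larger_left p i = card {j. j < i \<and> p ! i < p ! j}"

lemma larger_left_snoc_bump:
  assumes "i < length p"
  shows "larger_left (snoc_bump v p) i = larger_left p i"
  using assms by (auto simp: larger_left_def nth_snoc_bump intro!: arg_cong[where f = card])

lemma larger_left_snoc_bump_last:
  assumes p: "p \<in> perms n" and "x \<le> n"
  shows "larger_left (snoc_bump (n - x) p) n = x"
proof -
  have len: "length p = n" using p by (rule length_perms)
  have "{j. j < n \<and> snoc_bump (n - x) p ! n < snoc_bump (n - x) p ! j} = {j. j < n \<and> n - x \<le> p ! j}"
    using len by (auto simp: nth_snoc_bump nth_snoc_bump_last[of _ p, simplified len] bump_def split: if_splits)
  also have "card \<dots> = card {n - x..<n}"
  proof (rule bij_betw_same_card[of "(!) p"], rule bij_betw_imageI)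
    show "inj_on ((!) p) {j. j < n \<and> n - x \<le> p ! j}"
      using p len by (auto simp: inj_on_def permutations_of_set_def nth_eq_iff_index_eq)
    show "(!) p ` {j. j < n \<and> n - x \<le> p ! j} = {n - x..<n}"
    proof (intro equalityI subsetI)
      fix y assume y: "y \<in> {n - x..<n}"
      then have "y \<in> set p" using permutations_of_setD(1)[OF p] by simp
      then obtain j where "j < n" "p ! j = y" using len by (auto simp: in_set_conv_nth)
      with y show "y \<in> (!) p ` {j. j < n \<and> n - x \<le> p ! j}" by force
    qed (use nth_perms_less[OF p] in auto)
  qed
  finally show ?thesis using assms(2) by (simp add: larger_left_def)
qed

lemma larger_left_perm_of_code: "s \<in> inv_seqs n \<Longrightarrow> i < n \<Longrightarrow> larger_left (perm_of_code s) i = s ! i"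
proof (induction n arbitrary: s)
  case (Suc n)
  then obtain s' x where s: "s = s' @ [x]" "s' \<in> inv_seqs n" "x \<le> n"
    by (auto simp: inv_seqs_Suc)
  then have len: "length s' = n" "length (perm_of_code s') = n"
    by (simp_all add: length_inv_seqs length_perms perm_of_code_perms)
  show ?case
  proof (cases "i < n")
    case True
    with Suc.IH s len show ?thesis
      by (simp add: perm_of_code_snoc larger_left_snoc_bump nth_append)
  next
    case False
    with Suc.prems have "i = n" by simp
    with s len show ?thesis
      by (simp add: perm_of_code_snoc larger_left_snoc_bump_last perm_of_code_perms nth_append)
  qed
qed simp

lemma bij_betw_perm_of_code: "bij_betw perm_of_code (inv_seqs n) (perms n)"
proof -
  have inj: "inj_on perm_of_code (inv_seqs n)"
  proof (rule inj_onI)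
    fix s t assume "s \<in> inv_seqs n" "t \<in> inv_seqs n" "perm_of_code s = perm_of_code t"
    then show "s = t"
      by (metis length_inv_seqs nth_equalityI larger_left_perm_of_code)
  qed
  moreover have "perm_of_code ` inv_seqs n \<subseteq> perms n"
    using perm_of_code_perms by auto
  moreover have "card (perm_of_code ` inv_seqs n) = card (perms n)"
    by (simp add: card_image[OF inj] card_inv_seqs)
  ultimately show ?thesis
    by (simp add: bij_betw_def card_subset_eq)
qed

lemma larger_left_less:
  assumes "i < j" "p ! j < p ! i"
  shows "larger_left p i < larger_left p j"
proof -
  have "insert i {l. l < i \<and> p ! i < p ! l} \<subseteq> {l. l < j \<and> p ! j < p ! l}"
    using assms by auto
  then have "card (insert i {l. l < i \<and> p ! i < p ! l}) \<le> larger_left p j"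
    unfolding larger_left_def by (rule card_mono[rotated]) simp
  then show ?thesis by (simp add: larger_left_def)
qed

lemma larger_left_le:
  assumes "i < j" "p ! i < p ! j" "\<forall>l. i < l \<and> l < j \<longrightarrow> p ! l < p ! i"
  shows "larger_left p j \<le> larger_left p i"
proof -
  have "{l. l < j \<and> p ! j < p ! l} \<subseteq> {l. l < i \<and> p ! i < p ! l}"
  proof safe
    fix l assume l: "l < j" "p ! j < p ! l"
    have "\<not> i < l"
    proof
      assume "i < l"
      with assms(3) l(1) have "p ! l < p ! i" by blast
      with assms(2) l(2) show False by (meson less_asym less_trans)
    qed
    moreover have "l \<noteq> i" using assms(2) l(2) by auto
    ultimately show "l < i" by simp
    show "p ! i < p ! l" using assms(2) l(2) by (rule less_trans)
  qed
  then show ?thesis unfolding larger_left_def by (rule card_mono[rotated]) simp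
qed

lemma larger_left_less_Suc_iff:
  assumes "distinct p" "Suc k < length p"
  shows "larger_left p k < larger_left p (Suc k) \<longleftrightarrow> p ! Suc k < p ! k"
proof
  assume less: "larger_left p k < larger_left p (Suc k)"
  show "p ! Suc k < p ! k"
  proof (rule ccontr)
    assume "\<not> p ! Suc k < p ! k"
    moreover have "p ! Suc k \<noteq> p ! k" using assms by (simp add: nth_eq_iff_index_eq)
    ultimately have "p ! k < p ! Suc k" by simp
    then have "larger_left p (Suc k) \<le> larger_left p k" by (intro larger_left_le) auto
    with less show False by simp
  qed
qed (rule larger_left_less, simp)

lemma larger_left_eq_0_iff:
  assumes "distinct p" "k < length p"
  shows "larger_left p k = 0 \<longleftrightarrow> (\<forall>j<k. p ! j < p ! k)"
proof -
  have "{j. j < k \<and> p ! k < p ! j} = {} \<longleftrightarrow> (\<forall>j<k. p ! j < p ! k)"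
  proof (intro iffI allI impI)
    fix j assume "{j. j < k \<and> p ! k < p ! j} = {}" "j < k"
    moreover have "p ! j \<noteq> p ! k" using assms \<open>j < k\<close> by (simp add: nth_eq_iff_index_eq)
    ultimately show "p ! j < p ! k" by auto
  qed (auto dest: less_asym)
  then show ?thesis by (simp add: larger_left_def)
qed

lemma larger_left_eq_self_iff: "larger_left p k = k \<longleftrightarrow> (\<forall>j<k. p ! k < p ! j)"
proof
  assume "larger_left p k = k"
  then have "{j. j < k \<and> p ! k < p ! j} = {..<k}"
    unfolding larger_left_def by (intro card_subset_eq) auto
  then show "\<forall>j<k. p ! k < p ! j" by auto
next
  assume "\<forall>j<k. p ! k < p ! j"
  then have "{j. j < k \<and> p ! k < p ! j} = {..<k}" by auto
  then show "larger_left p k = k" by (simp add: larger_left_def)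
qed

lemma larger_left_rmin_iff:
  assumes "distinct p" "k < length p"
  shows "(\<forall>j. k < j \<and> j < length p \<longrightarrow> larger_left p k < larger_left p j)
     \<longleftrightarrow> (\<forall>j. k < j \<and> j < length p \<longrightarrow> p ! j < p ! k)"
proof
  assume larger: "\<forall>j. k < j \<and> j < length p \<longrightarrow> larger_left p k < larger_left p j"
  show "\<forall>j. k < j \<and> j < length p \<longrightarrow> p ! j < p ! k"
  proof (rule ccontr)
    assume "\<not> ?thesis"
    then obtain j0 where j0: "k < j0" "j0 < length p" "\<not> p ! j0 < p ! k" by blast
    moreover have "p ! j0 \<noteq> p ! k" using assms j0 by (simp add: nth_eq_iff_index_eq)
    ultimately have ex: "\<exists>j. k < j \<and> j < length p \<and> p ! k < p ! j" by auto
    define j where "j = (LEAST j. k < j \<and> j < length p \<and> p ! k < p ! j)"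
    have j: "k < j" "j < length p" "p ! k < p ! j"
      using LeastI_ex[OF ex] by (simp_all add: j_def)
    have "p ! l < p ! k" if "k < l" "l < j" for l
    proof -
      have "\<not> (k < l \<and> l < length p \<and> p ! k < p ! l)"
        using that(2) unfolding j_def by (rule not_less_Least)
      then have "\<not> p ! k < p ! l" using that j(2) by simp
      moreover have "p ! l \<noteq> p ! k" using assms that j by (simp add: nth_eq_iff_index_eq)
      ultimately show ?thesis by simp
    qed
    then have "larger_left p j \<le> larger_left p k" using j by (intro larger_left_le) auto
    moreover have "larger_left p k < larger_left p j" using larger j(1,2) by blast
    ultimately show False by simp
  qed
qed (auto intro: larger_left_less)

definition des :: "'a::linorder list \<Rightarrow> nat" where
  "des p = card {i. Suc i < length p \<and> p ! Suc i < p ! i}"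

definition lrmax :: "'a::linorder list \<Rightarrow> nat" where
  "lrmax p = card {i. i < length p \<and> (\<forall>j<i. p ! j < p ! i)}"

definition lrmin :: "'a::linorder list \<Rightarrow> nat" where
  "lrmin p = card {i. i < length p \<and> (\<forall>j<i. p ! i < p ! j)}"

definition rlmax :: "'a::linorder list \<Rightarrow> nat" where
  "rlmax p = card {i. i < length p \<and> (\<forall>j. i < j \<and> j < length p \<longrightarrow> p ! j < p ! i)}"

lemma stats_perm_of_code:
  assumes s: "s \<in> inv_seqs n"
  shows "asc s = des (perm_of_code s)" "zero s = lrmax (perm_of_code s)"
    "maxst s = lrmin (perm_of_code s)" "rmin s = rlmax (perm_of_code s)"
proof -
  define p where "p = perm_of_code s"
  have p: "distinct p" "length p = n"
    using perm_of_code_perms[OF s] by (simp_all add: p_def permutations_of_setD length_perms)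
  have len: "length s = n" using s by (rule length_inv_seqs)
  have code: "\<And>i. i < n \<Longrightarrow> s ! i = larger_left p i"
    using larger_left_perm_of_code[OF s] by (simp add: p_def)
  show "asc s = des (perm_of_code s)"
    unfolding asc_def des_def p_def[symmetric]
    using larger_left_less_Suc_iff[OF p(1)] code len p(2)
    by (intro arg_cong[where f = card]) auto
  show "zero s = lrmax (perm_of_code s)"
    unfolding zero_def lrmax_def p_def[symmetric]
    using larger_left_eq_0_iff[OF p(1)] code len p(2)
    by (intro arg_cong[where f = card]) auto
  show "maxst s = lrmin (perm_of_code s)"
    unfolding maxst_def lrmin_def p_def[symmetric]
    using code len p(2) by (intro arg_cong[where f = card]) (auto simp: larger_left_eq_self_iff)
  have "is_rmin_pos s k \<longleftrightarrow> (\<forall>j. k < j \<and> j < n \<longrightarrow> p ! j < p ! k)" if "k < n" for k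
    using larger_left_rmin_iff[OF p(1), of k] that code len p(2) by (auto simp: is_rmin_pos_def)
  then show "rmin s = rlmax (perm_of_code s)"
    unfolding rmin_eq_card_pos rlmax_def p_def[symmetric]
    using len p(2) by (intro arg_cong[where f = card]) auto
qed

section \<open>Inverse descents\<close>

definition pos :: "'a list \<Rightarrow> 'a \<Rightarrow> nat" where
  "pos q w = (THE i. i < length q \<and> q ! i = w)"

lemma pos_eqI: "distinct q \<Longrightarrow> i < length q \<Longrightarrow> q ! i = w \<Longrightarrow> pos q w = i"
  unfolding pos_def by (rule the_equality) (auto simp: nth_eq_iff_index_eq)

lemma pos_perms:
  assumes "p \<in> perms n" "w < n"
  shows "pos p w < n" "p ! pos p w = w"
proof -
  obtain i where "i < n" "p ! i = w"
    using assms permutations_of_setD(1)[OF assms(1)] length_perms[OF assms(1)]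
    by (metis in_set_conv_nth lessThan_iff)
  moreover have "pos p w = i"
    using calculation assms(1) by (intro pos_eqI) (simp_all add: permutations_of_setD length_perms)
  ultimately show "pos p w < n" "p ! pos p w = w" by simp_all
qed

lemma pos_nth_perms: "p \<in> perms n \<Longrightarrow> i < n \<Longrightarrow> pos p (p ! i) = i"
  by (simp add: pos_eqI permutations_of_setD length_perms)

lemma pos_perms_eq_iff: "p \<in> perms n \<Longrightarrow> a < n \<Longrightarrow> b < n \<Longrightarrow> pos p a = pos p b \<longleftrightarrow> a = b"
  by (metis pos_perms(2))

definition iasc :: "nat list \<Rightarrow> nat" where
  "iasc q = card {w. Suc w < length q \<and> pos q w < pos q (Suc w)}"

text \<open>The inverse descents \<open>n - 1 - x\<close> of \<open>q \<in> perms n\<close>, reflected to \<open>x\<close>, together with \<open>0\<close>;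
  for \<open>q = perm_of_code s\<close> this is the set recorded by \<open>hyb_set (length s) s\<close>.\<close>

definition ides_marks :: "nat list \<Rightarrow> nat set" where
  "ides_marks q = {x. x < length q \<and> (x = 0 \<or> pos q (length q - x) < pos q (length q - Suc x))}"

lemma pos_snoc_bump:
  assumes p: "p \<in> perms n" and "v \<le> n" "w \<le> n"
  shows "pos (snoc_bump v p) w = (if w < v then pos p w else if w = v then n else pos p (w - 1))"
proof -
  have len: "length p = n" using p by (rule length_perms)
  have q: "distinct (snoc_bump v p)" "length (snoc_bump v p) = Suc n"
    using snoc_bump_perms[OF assms(1,2)] len by (simp_all add: permutations_of_setD)
  consider "w < v" | "w = v" | "v < w" by linarith
  then show ?thesis
  proof cases
    case 1
    with assms have "snoc_bump v p ! pos p w = w"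
      by (simp add: nth_snoc_bump len pos_perms bump_def)
    moreover have "pos p w < Suc n" using 1 assms pos_perms(1)[OF p, of w] by simp
    ultimately show ?thesis using 1 q by (simp add: pos_eqI)
  next
    case 2
    with q show ?thesis by (simp add: pos_eqI nth_snoc_bump_last[of v p, unfolded len])
  next
    case 3
    with assms have "snoc_bump v p ! pos p (w - 1) = w"
      by (simp add: nth_snoc_bump len pos_perms bump_def)
    moreover have "pos p (w - 1) < Suc n" using 3 assms pos_perms(1)[OF p, of "w - 1"] by linarith
    ultimately show ?thesis using 3 q by (simp add: pos_eqI)
  qed
qed

lemma mem_ides_marks_snoc_bump:
  assumes p: "p \<in> perms n" and v: "v \<le> n" and y: "0 < y" "y \<le> n"
  shows "y \<in> ides_marks (snoc_bump v p) \<longleftrightarrow>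
    (if y < n - v then y \<in> ides_marks p else y = n - v \<or> (Suc (n - v) < y \<and> y - 1 \<in> ides_marks p))"
proof -
  let ?q = "snoc_bump v p"
  have len: "length p = n" using p by (rule length_perms)
  have posq: "\<And>w. w \<le> n \<Longrightarrow> pos ?q w = (if w < v then pos p w else if w = v then n else pos p (w - 1))"
    using pos_snoc_bump[OF p v] .
  have posp: "\<And>w. w < n \<Longrightarrow> pos p w < n" using pos_perms(1)[OF p] .
  have q_iff: "y \<in> ides_marks ?q \<longleftrightarrow> pos ?q (Suc n - y) < pos ?q (n - y)"
    using len y by (simp add: ides_marks_def)
  have p_iff: "\<And>z. z \<in> ides_marks p \<longleftrightarrow> z < n \<and> (z = 0 \<or> pos p (n - z) < pos p (n - Suc z))"
    using len by (simp add: ides_marks_def)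
  consider "y < n - v" | "y = n - v" | "y = Suc (n - v)" | "Suc (n - v) < y" by linarith
  then show ?thesis
  proof cases
    case 1
    then have "pos ?q (Suc n - y) = pos p (n - y)" "pos ?q (n - y) = pos p (n - Suc y)"
      using posq[of "Suc n - y"] posq[of "n - y"] y by auto
    moreover have "y < n" using 1 by linarith
    ultimately show ?thesis using 1 y q_iff p_iff[of y] by simp
  next
    case 2
    then have a: "Suc n - y = Suc v" "n - y = v" "v < n" using v y by auto
    then have "pos ?q (Suc n - y) = pos p v" "pos ?q (n - y) = n"
      using posq[of "Suc v"] posq[of v] by auto
    with a posp[of v] q_iff 2 show ?thesis by simp
  next
    case 3
    then have a: "Suc n - y = v" "n - y = v - 1" "0 < v" using v y by auto
    then have "pos ?q (Suc n - y) = n" "pos ?q (n - y) = pos p (v - 1)"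
      using posq[of v] posq[of "v - 1"] v by auto
    moreover have "pos p (v - 1) < n" using a v posp[of "v - 1"] by linarith
    ultimately show ?thesis using q_iff 3 by simp
  next
    case 4
    then have "pos ?q (Suc n - y) = pos p (n - (y - 1))" "pos ?q (n - y) = pos p (n - Suc (y - 1))"
      using posq[of "Suc n - y"] posq[of "n - y"] y by auto
    moreover have "y - 1 < n" using y by linarith
    ultimately show ?thesis using 4 q_iff p_iff[of "y - 1"] by simp
  qed
qed

lemma ides_marks_snoc_bump:
  assumes p: "p \<in> perms n" and v: "v \<le> n"
  shows "ides_marks (snoc_bump v p) = bump_insert (n - v) (ides_marks p)"
proof (intro set_eqI)
  fix y
  have len: "length p = n" using p by (rule length_perms)
  consider "y = 0" | "n < y" | "0 < y" "y \<le> n" by linarith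
  then show "y \<in> ides_marks (snoc_bump v p) \<longleftrightarrow> y \<in> bump_insert (n - v) (ides_marks p)"
  proof cases
    case 1
    moreover have "n - v \<noteq> 0 \<Longrightarrow> 0 \<in> ides_marks p" using len by (simp add: ides_marks_def)
    ultimately show ?thesis using len by (auto simp: ides_marks_def mem_bump_insert)
  next
    case 2
    then show ?thesis using len by (auto simp: ides_marks_def mem_bump_insert)
  next
    case 3
    then show ?thesis by (simp add: mem_ides_marks_snoc_bump[OF p v] mem_bump_insert)
  qed
qed

lemma iasc_add_card_ides:
  assumes p: "p \<in> perms n"
  shows "iasc p + card {w. Suc w < n \<and> pos p (Suc w) < pos p w} = n - 1"
proof -
  let ?A = "{w. Suc w < n \<and> pos p w < pos p (Suc w)}" and ?D = "{w. Suc w < n \<and> pos p (Suc w) < pos p w}"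
  have "?A \<union> ?D = {..<n - 1}"
  proof (intro equalityI subsetI)
    fix w assume "w \<in> {..<n - 1}"
    then have "Suc w < n" "pos p w \<noteq> pos p (Suc w)"
      using pos_perms_eq_iff[OF p, of w "Suc w"] by simp_all
    then show "w \<in> ?A \<union> ?D" by (auto simp: nat_neq_iff)
  qed auto
  moreover have "finite ?A" "finite ?D" by (auto intro: finite_subset[of _ "{..<n}"])
  ultimately have "card ?A + card ?D = n - 1"
    by (simp flip: card_Un_disjoint add: disjoint_iff)
  then show ?thesis using length_perms[OF p] by (simp add: iasc_def)
qed

lemma card_ides_marks:
  assumes p: "p \<in> perms n" and "0 < n"
  shows "card (ides_marks p) = Suc (card {w. Suc w < n \<and> pos p (Suc w) < pos p w})"
proof -
  let ?D = "{w. Suc w < n \<and> pos p (Suc w) < pos p w}"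
  have "ides_marks p = insert 0 ((\<lambda>w. n - Suc w) ` ?D)"
  proof (intro set_eqI iffI)
    fix x assume "x \<in> ides_marks p"
    moreover have "Suc (n - Suc x) = n - x" if "x < n" using that by simp
    ultimately show "x \<in> insert 0 ((\<lambda>w. n - Suc w) ` ?D)"
      using length_perms[OF p] by (auto simp: ides_marks_def image_iff intro!: exI[of _ "n - Suc x"])
  qed (use length_perms[OF p] \<open>0 < n\<close> in \<open>auto simp: ides_marks_def Suc_diff_Suc\<close>)
  moreover have "inj_on (\<lambda>w. n - Suc w) ?D" by (rule inj_onI) auto
  moreover have "0 \<notin> (\<lambda>w. n - Suc w) ` ?D" by auto
  moreover have "finite ?D" by (auto intro: finite_subset[of _ "{..<n}"])
  ultimately show ?thesis by (simp add: card_image)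
qed

lemma iasc_eq_card_ides_marks: "p \<in> perms n \<Longrightarrow> iasc p = n - card (ides_marks p)"
  using iasc_add_card_ides[of p n] card_ides_marks[of p n]
  by (cases "n = 0") (auto simp: iasc_def ides_marks_def length_perms)

lemma iasc_snoc_bump:
  assumes p: "p \<in> perms n" and v: "v \<le> n"
  shows "iasc (snoc_bump v p) = iasc p + (if n - v \<in> ides_marks p then 1 else 0)"
proof -
  have "ides_marks p \<subseteq> {..<n}" using length_perms[OF p] by (auto simp: ides_marks_def)
  then have "finite (ides_marks p)" "card (ides_marks p) \<le> n"
    by (auto intro: finite_subset dest: card_mono[rotated])
  then show ?thesis
    using iasc_eq_card_ides_marks[OF snoc_bump_perms[OF p v]] iasc_eq_card_ides_marks[OF p]
    by (simp add: ides_marks_snoc_bump[OF p v] card_bump_insert)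
qed

lemma hyb_set_eq_ides_marks: "s \<in> inv_seqs n \<Longrightarrow> hyb_set n s = ides_marks (perm_of_code s)"
proof (induction n arbitrary: s)
  case 0
  then show ?case by (simp add: inv_seqs_def ides_marks_def)
next
  case (Suc n)
  then obtain s' x where s: "s = s' @ [x]" "s' \<in> inv_seqs n" "x \<le> n"
    by (auto simp: inv_seqs_Suc)
  then have "length s' = n" by (simp add: length_inv_seqs)
  moreover have "n - (n - x) = x" using s(3) by simp
  ultimately show ?case using Suc.IH s ides_marks_snoc_bump[OF perm_of_code_perms[OF s(2)], of "n - x"]
    by (simp add: hyb_set_snoc perm_of_code_snoc hyb_set_cong_short[of s' "Suc n" n])
qed

lemma hyb_rep_eq_iasc: "s \<in> inv_seqs n \<Longrightarrow> hyb_rep n s = iasc (perm_of_code s)"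
proof (induction n arbitrary: s)
  case 0
  then show ?case by (simp add: inv_seqs_def iasc_def)
next
  case (Suc n)
  then obtain s' x where s: "s = s' @ [x]" "s' \<in> inv_seqs n" "x \<le> n"
    by (auto simp: inv_seqs_Suc)
  then have "length s' = n" by (simp add: length_inv_seqs)
  moreover have "n - (n - x) = x" using s(3) by simp
  ultimately show ?case using Suc.IH s iasc_snoc_bump[OF perm_of_code_perms[OF s(2)], of "n - x"]
    by (simp add: hyb_rep_snoc perm_of_code_snoc hyb_set_eq_ides_marks
        hyb_rep_cong_short[of s' "Suc n" n] hyb_set_cong_short[of s' "Suc n" n])
qed

section \<open>The complement of the inverse\<close>

definition compl_inv :: "nat list \<Rightarrow> nat list" where
  "compl_inv p = map (\<lambda>v. length p - 1 - pos p v) [0..<length p]"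

lemma length_compl_inv [simp]: "length (compl_inv p) = length p"
  by (simp add: compl_inv_def)

lemma nth_compl_inv: "v < length p \<Longrightarrow> compl_inv p ! v = length p - 1 - pos p v"
  by (simp add: compl_inv_def)

lemma compl_inv_perms:
  assumes p: "p \<in> perms n"
  shows "compl_inv p \<in> perms n"
proof -
  have len: "length p = n" using p by (rule length_perms)
  have "inj_on ((!) (compl_inv p)) {..<n}"
  proof (rule inj_onI)
    fix a b assume "a \<in> {..<n}" "b \<in> {..<n}" "compl_inv p ! a = compl_inv p ! b"
    moreover from this have "pos p a < n" "pos p b < n" using pos_perms(1)[OF p] by auto
    ultimately have "pos p a = pos p b" by (simp add: nth_compl_inv len)
    with \<open>a \<in> {..<n}\<close> \<open>b \<in> {..<n}\<close> show "a = b" using pos_perms_eq_iff[OF p, of a b] by simp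
  qed
  then have "distinct (compl_inv p)" by (auto simp: distinct_conv_nth inj_on_def len)
  moreover have "set (compl_inv p) \<subseteq> {..<n}"
    using len by (auto simp: in_set_conv_nth nth_compl_inv)
  ultimately show ?thesis
    using len by (intro permutations_of_setI card_subset_eq) (simp_all add: distinct_card)
qed

lemma pos_compl_inv:
  assumes p: "p \<in> perms n" and "i < n"
  shows "pos (compl_inv p) i = p ! (n - 1 - i)"
proof (rule pos_eqI)
  have len: "length p = n" using p by (rule length_perms)
  show "distinct (compl_inv p)" using compl_inv_perms[OF p] by (rule permutations_of_setD)
  show "p ! (n - 1 - i) < length (compl_inv p)" using nth_perms_less[OF p] assms(2) len by simp
  then show "compl_inv p ! (p ! (n - 1 - i)) = i"
    using assms len by (simp add: nth_compl_inv pos_nth_perms)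
qed

lemma bij_betw_compl_inv: "bij_betw compl_inv (perms n) (perms n)"
proof -
  have "inj_on compl_inv (perms n)"
  proof (rule inj_onI)
    fix p q assume p: "p \<in> perms n" and q: "q \<in> perms n" and eq: "compl_inv p = compl_inv q"
    have "p ! i = q ! i" if "i < n" for i
      using pos_compl_inv[OF p, of "n - 1 - i"] pos_compl_inv[OF q, of "n - 1 - i"] eq that by simp
    then show "p = q" using length_perms[OF p] length_perms[OF q] by (simp add: nth_equalityI)
  qed
  moreover have "compl_inv ` perms n = perms n"
    using calculation by (intro endo_inj_surj) (auto simp: compl_inv_perms)
  ultimately show ?thesis by (simp add: bij_betw_def)
qed

lemma card_perms_reindex:
  assumes p: "p \<in> perms n" and PQ: "\<And>i. i < n \<Longrightarrow> P i \<longleftrightarrow> Q (p ! i)"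
  shows "card {i. i < n \<and> P i} = card {v. v < n \<and> Q v}"
proof (rule bij_betw_same_card[of "(!) p"], rule bij_betw_imageI)
  show "inj_on ((!) p) {i. i < n \<and> P i}"
    using permutations_of_setD(2)[OF p] length_perms[OF p] by (auto simp: inj_on_def nth_eq_iff_index_eq)
  show "(!) p ` {i. i < n \<and> P i} = {v. v < n \<and> Q v}"
  proof (intro equalityI subsetI)
    fix v assume "v \<in> {v. v < n \<and> Q v}"
    with pos_perms[OF p, of v] PQ[of "pos p v"] show "v \<in> (!) p ` {i. i < n \<and> P i}" by force
  qed (use PQ nth_perms_less[OF p] in auto)
qed

lemma lrmax_pos_iff:
  assumes p: "p \<in> perms n" and i: "i < n"
  shows "(\<forall>j<i. p ! j < p ! i) \<longleftrightarrow> (\<forall>w. p ! i < w \<and> w < n \<longrightarrow> i < pos p w)"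
proof
  assume left: "\<forall>j<i. p ! j < p ! i"
  show "\<forall>w. p ! i < w \<and> w < n \<longrightarrow> i < pos p w"
  proof (intro allI impI)
    fix w assume w: "p ! i < w \<and> w < n"
    then have "pos p w \<noteq> i" "\<not> pos p w < i" using pos_perms[OF p, of w] left by auto
    then show "i < pos p w" by simp
  qed
next
  assume right: "\<forall>w. p ! i < w \<and> w < n \<longrightarrow> i < pos p w"
  show "\<forall>j<i. p ! j < p ! i"
  proof (intro allI impI)
    fix j assume j: "j < i"
    then have "p ! j \<noteq> p ! i" using p i by (metis nat_neq_iff order.strict_trans pos_nth_perms)
    moreover have "\<not> p ! i < p ! j"
      using right[rule_format, of "p ! j"] j i nth_perms_less[OF p] pos_nth_perms[OF p] by force
    ultimately show "p ! j < p ! i" by simp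
  qed
qed

lemma lrmin_pos_iff:
  assumes p: "p \<in> perms n" and i: "i < n"
  shows "(\<forall>j<i. p ! i < p ! j) \<longleftrightarrow> (\<forall>w<p ! i. i < pos p w)"
proof
  assume left: "\<forall>j<i. p ! i < p ! j"
  show "\<forall>w<p ! i. i < pos p w"
  proof (intro allI impI)
    fix w assume w: "w < p ! i"
    then have "w < n" using nth_perms_less[OF p i] by simp
    then have "pos p w \<noteq> i" "\<not> pos p w < i" using pos_perms[OF p, of w] left w by auto
    then show "i < pos p w" by simp
  qed
next
  assume right: "\<forall>w<p ! i. i < pos p w"
  show "\<forall>j<i. p ! i < p ! j"
  proof (intro allI impI)
    fix j assume j: "j < i"
    then have "p ! j \<noteq> p ! i" using p i by (metis nat_neq_iff order.strict_trans pos_nth_perms)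
    moreover have "\<not> p ! j < p ! i"
      using right[rule_format, of "p ! j"] j i pos_nth_perms[OF p] by force
    ultimately show "p ! i < p ! j" by simp
  qed
qed

lemma compl_inv_less_iff:
  assumes p: "p \<in> perms n" and "v < n" "w < n"
  shows "compl_inv p ! w < compl_inv p ! v \<longleftrightarrow> pos p v < pos p w"
proof -
  have "pos p v < n" "pos p w < n" using pos_perms(1)[OF p] assms by simp_all
  then show ?thesis using assms length_perms[OF p] by (simp add: nth_compl_inv) arith
qed

lemma des_compl_inv:
  assumes p: "p \<in> perms n"
  shows "des (compl_inv p) = iasc p"
proof -
  have "compl_inv p ! Suc i < compl_inv p ! i \<longleftrightarrow> pos p i < pos p (Suc i)" if "Suc i < n" for i
    using compl_inv_less_iff[OF p, of i "Suc i"] that by simp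
  then show ?thesis
    unfolding des_def iasc_def using length_perms[OF p] by (intro arg_cong[where f = card]) auto
qed

lemma iasc_compl_inv:
  assumes p: "p \<in> perms n"
  shows "iasc (compl_inv p) = des p"
proof -
  let ?r = "\<lambda>i. n - Suc (Suc i)"
  have "{w. Suc w < n \<and> pos (compl_inv p) w < pos (compl_inv p) (Suc w)}
      = ?r ` {i. Suc i < n \<and> p ! Suc i < p ! i}"
  proof (intro equalityI subsetI)
    fix w assume w: "w \<in> {w. Suc w < n \<and> pos (compl_inv p) w < pos (compl_inv p) (Suc w)}"
    then have "w = ?r (?r w)" "n - 1 - w = Suc (?r w)" "n - 1 - Suc w = ?r w" by auto
    with w pos_compl_inv[OF p] show "w \<in> ?r ` {i. Suc i < n \<and> p ! Suc i < p ! i}"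
      by (intro image_eqI[of w _ "?r w"]) auto
  next
    fix w assume "w \<in> ?r ` {i. Suc i < n \<and> p ! Suc i < p ! i}"
    then obtain i where "Suc i < n" "p ! Suc i < p ! i" "w = ?r i" by blast
    moreover from this have "n - 1 - w = Suc i" "n - 1 - Suc w = i" by auto
    ultimately show "w \<in> {w. Suc w < n \<and> pos (compl_inv p) w < pos (compl_inv p) (Suc w)}"
      using pos_compl_inv[OF p] by auto
  qed
  moreover have "inj_on ?r {i. Suc i < n \<and> p ! Suc i < p ! i}" by (rule inj_onI) auto
  ultimately show ?thesis
    using length_perms[OF p] by (simp add: iasc_def des_def card_image)
qed

lemma rlmax_compl_inv:
  assumes p: "p \<in> perms n"
  shows "rlmax (compl_inv p) = lrmax p"
proof -
  have "rlmax (compl_inv p) = card {v. v < n \<and> (\<forall>w. v < w \<and> w < n \<longrightarrow> pos p v < pos p w)}"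
    unfolding rlmax_def using compl_inv_less_iff[OF p] length_perms[OF p]
    by (intro arg_cong[where f = card]) auto
  also have "\<dots> = lrmax p"
    unfolding lrmax_def length_perms[OF p]
    by (rule card_perms_reindex[OF p, symmetric]) (simp add: lrmax_pos_iff[OF p] pos_nth_perms[OF p])
  finally show ?thesis .
qed

lemma lrmax_compl_inv:
  assumes p: "p \<in> perms n"
  shows "lrmax (compl_inv p) = lrmin p"
proof -
  have "lrmax (compl_inv p) = card {v. v < n \<and> (\<forall>w<v. pos p v < pos p w)}"
    unfolding lrmax_def using compl_inv_less_iff[OF p] length_perms[OF p]
    by (intro arg_cong[where f = card]) auto
  also have "\<dots> = lrmin p"
    unfolding lrmin_def length_perms[OF p]
    by (rule card_perms_reindex[OF p, symmetric]) (simp add: lrmin_pos_iff[OF p] pos_nth_perms[OF p])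
  finally show ?thesis .
qed

section \<open>Matching the fibres\<close>

lemma card_filter_bij_betw: "bij_betw h A B \<Longrightarrow> card {a \<in> A. P (h a)} = card {b \<in> B. P b}"
  by (rule bij_betw_same_card[of h]) (auto simp: bij_betw_def inj_on_def)

lemma ex_bij_betw_of_card_fibers:
  assumes "finite A" "finite B" "\<And>y. card {a \<in> A. f a = y} = card {b \<in> B. g b = y}"
  shows "\<exists>\<rho>. bij_betw \<rho> A B \<and> (\<forall>a\<in>A. g (\<rho> a) = f a)"
proof -
  have "\<forall>y. \<exists>h. bij_betw h {a \<in> A. f a = y} {b \<in> B. g b = y}"
    using assms by (auto intro!: finite_same_card_bij)
  then obtain H where H: "\<And>y. bij_betw (H y) {a \<in> A. f a = y} {b \<in> B. g b = y}"
    by metis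
  define \<rho> where "\<rho> a = H (f a) a" for a
  have "bij_betw \<rho> {a \<in> A. f a = y} {b \<in> B. g b = y}" for y
    using H[of y] by (rule bij_betw_cong[THEN iffD1, rotated]) (simp add: \<rho>_def)
  then have "bij_betw \<rho> (\<Union>y. {a \<in> A. f a = y}) (\<Union>y. {b \<in> B. g b = y})"
    by (intro bij_betw_UNION_disjoint) (auto simp: disjoint_family_on_def)
  moreover have "(\<Union>y. {a \<in> A. f a = y}) = A" "(\<Union>y. {b \<in> B. g b = y}) = B" by auto
  moreover have "g (\<rho> a) = f a" if "a \<in> A" for a
    using H[of "f a"] that by (auto simp: \<rho>_def bij_betw_def)
  ultimately show ?thesis by auto
qed

lemma card_inv_seqs_eq_card_perms:
  "card {s \<in> inv_seqs n. Q (rep s) (asc_zero_max_rmin s)}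
 = card {p \<in> perms n. Q (iasc p) (des p, lrmax p, lrmin p, rlmax p)}"
proof -
  have "card {s \<in> inv_seqs n. Q (rep s) (asc_zero_max_rmin s)}
      = card {s \<in> inv_seqs n. Q (hyb_rep n s) (asc_zero_max_rmin s)}"
    by (rule card_rep_eq_card_hyb_rep)
  also have "\<dots> = card {s \<in> inv_seqs n. (\<lambda>p. Q (iasc p) (des p, lrmax p, lrmin p, rlmax p)) (perm_of_code s)}"
    by (intro arg_cong[where f = card])
      (auto simp: asc_zero_max_rmin_def stats_perm_of_code hyb_rep_eq_iasc)
  also have "\<dots> = card {p \<in> perms n. Q (iasc p) (des p, lrmax p, lrmin p, rlmax p)}"
    by (rule card_filter_bij_betw[OF bij_betw_perm_of_code])
  finally show ?thesis .
qed

lemma card_perms_compl_inv: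
  "card {p \<in> perms n. (des p, iasc p, lrmax p, lrmin p) = y}
 = card {p \<in> perms n. (iasc p, des p, rlmax p, lrmax p) = y}"
proof -
  have "card {p \<in> perms n. (des p, iasc p, lrmax p, lrmin p) = y}
      = card {p \<in> perms n. (\<lambda>q. (iasc q, des q, rlmax q, lrmax q) = y) (compl_inv p)}"
    by (intro arg_cong[where f = card])
      (auto simp: des_compl_inv iasc_compl_inv rlmax_compl_inv lrmax_compl_inv)
  also have "\<dots> = card {p \<in> perms n. (iasc p, des p, rlmax p, lrmax p) = y}"
    by (rule card_filter_bij_betw[OF bij_betw_compl_inv])
  finally show ?thesis .
qed

lemma card_stats_fibers_eq:
  "card {s \<in> inv_seqs n. (asc s, rep s, zero s, maxst s) = y}
 = card {t \<in> inv_seqs n. (rep t, asc t, rmin t, zero t) = y}"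
proof -
  have "card {s \<in> inv_seqs n. (asc s, rep s, zero s, maxst s) = y}
      = card {p \<in> perms n. (des p, iasc p, lrmax p, lrmin p) = y}"
    using card_inv_seqs_eq_card_perms[of n "\<lambda>h (a, z, m, r). (a, h, z, m) = y"]
    by (simp add: asc_zero_max_rmin_def)
  also have "\<dots> = card {p \<in> perms n. (iasc p, des p, rlmax p, lrmax p) = y}"
    by (rule card_perms_compl_inv)
  also have "\<dots> = card {t \<in> inv_seqs n. (rep t, asc t, rmin t, zero t) = y}"
    using card_inv_seqs_eq_card_perms[of n "\<lambda>h (a, z, m, r). (h, a, r, z) = y"]
    by (simp add: asc_zero_max_rmin_def)
  finally show ?thesis .
qed

theorem mainTheorem5:
  fixes n :: nat
  assumes "n \<ge> 1"
  shows "\<exists>\<rho>. bij_betw \<rho> (inv_seqs n) (inv_seqs n) \<and>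
    (\<forall>s\<in>inv_seqs n. (asc s, rep s, zero s, maxst s) =
                        (rep (\<rho> s), asc (\<rho> s), rmin (\<rho> s), zero (\<rho> s)))"
proof -
  obtain \<rho> where "bij_betw \<rho> (inv_seqs n) (inv_seqs n)"
    and "\<forall>s\<in>inv_seqs n. (rep (\<rho> s), asc (\<rho> s), rmin (\<rho> s), zero (\<rho> s)) = (asc s, rep s, zero s, maxst s)"
    using ex_bij_betw_of_card_fibers[OF finite_inv_seqs finite_inv_seqs card_stats_fibers_eq] by blast
  then show ?thesis by auto
qed

end
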